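(* Let $q > 5$ be a Sophie Germain prime with $z(2q+1) \mid \pi(q)$. Then $q \equiv 8 \pmod{15}$.
   Context: A Sophie Germain prime is a prime $q$ with $2q+1$ prime. $F_n$ denotes the $n$-th Fibonacci number ($F_0=0$, $F_1=1$). For a prime $p$, $z(p)$ is the least positive integer $k$ with $p \mid F_k$. $\pi(n)$ is the Pisano period, the least period of $(F_m \bmod n)_{m\ge0}$. *)

theory Defs
  imports "HOL-Number_Theory.Number_Theory"
begin

definition fib_rank :: "nat \<Rightarrow> nat" where
  "fib_rank p = (LEAST k. 0 < k \<and> p dvd fib k)"

definition pisano :: "nat \<Rightarrow> nat" where
  "pisano n = (LEAST k. 0 < k \<and> (\<forall>m. fib (m + k) mod n = fib m mod n))"

end

(*
  Expanding Binet's formula binomially gives 2^(n-1) F_n = sum over odd k of C(n,k) 5^((k-1)/2).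
  For an odd prime p this yields F_p = 5^((p-1)/2) and 2 F_(p+1) = 1 + 5^((p-1)/2) mod p, and
  5^((p-1)/2) = (5/p) = +-1 by Euler's criterion, so p divides F_(p-1) or F_(p+1).
  If q = 1 or 4 mod 5, reciprocity gives (5/q) = 1, hence F_(q-1) = 0 and F_q = 1 mod q, so
  pi(q) divides q - 1. Then z(p), for p = 2q + 1, divides 2q - 2 and one of 2q, 2q + 2, hence 4,
  so p divides F_4 = 3, which is absurd. The remaining residues of q modulo 3 and 5 are excluded
  because q and 2q + 1 are primes larger than 5, leaving q = 8 mod 15.
*)
theory Submission
  imports Defs
begin

definition fib_binom_sum :: "nat \<Rightarrow> nat" where
  "fib_binom_sum n = (\<Sum>k\<le>n. if odd k then (n choose k) * 5 ^ (k div 2) else 0)"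

lemma fib_binom_sum_eq: "2 ^ n * fib n = 2 * fib_binom_sum n"
proof -
  define s :: real where "s = sqrt 5"
  have s_nz: "s \<noteq> 0" unfolding s_def by simp
  have s_odd_power: "s ^ k = 5 ^ (k div 2) * s" if "odd k" for k
  proof -
    have "k = 2 * (k div 2) + 1" using that by presburger
    then have "s ^ k = (s\<^sup>2) ^ (k div 2) * s"
      by (metis power_Suc2 power_mult Suc_eq_plus1)
    then show ?thesis by (simp add: s_def)
  qed
  have "(1 + s) ^ n - (1 - s) ^ n = (\<Sum>k\<le>n. of_nat (n choose k) * (s ^ k - (-s) ^ k))"
    using binomial_ring[of s 1 n] binomial_ring[of "-s" 1 n]
    by (simp add: sum_subtractf algebra_simps)
  also have "\<dots> = (\<Sum>k\<le>n. 2 * s * (if odd k then of_nat (n choose k) * 5 ^ (k div 2) else 0))"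
    by (intro sum.cong refl) (auto simp: s_odd_power)
  also have "\<dots> = 2 * s * real (fib_binom_sum n)"
    by (simp add: fib_binom_sum_def sum_distrib_left if_distrib cong: if_cong)
  finally have binom: "(1 + s) ^ n - (1 - s) ^ n = 2 * s * real (fib_binom_sum n)" .
  have "real (2 ^ n * fib n) * s = (1 + s) ^ n - (1 - s) ^ n"
    using fib_closed_form[of n] s_nz unfolding s_def[symmetric]
    by (simp add: power_divide field_simps)
  then have "real (2 ^ n * fib n) = real (2 * fib_binom_sum n)"
    using binom s_nz by simp
  then show ?thesis by (simp only: of_nat_eq_iff)
qed

lemma fib_binom_sum_prime_cong:
  assumes "prime p" "odd p"
  shows "[fib_binom_sum p = 5 ^ (p div 2)] (mod p)"
proof -
  let ?f = "\<lambda>k. if odd k then (p choose k) * 5 ^ (k div 2) else 0"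
  have "[(\<Sum>k<p. ?f k) = 0] (mod p)"
    unfolding cong_0_iff
  proof (intro dvd_sum)
    fix k assume "k \<in> {..<p}"
    then have "k = 0 \<or> p dvd (p choose k)"
      using assms(1) dvd_choose_prime[of k p] by auto
    then show "p dvd ?f k"
      by (auto intro: dvd_mult2)
  qed
  then have "[(\<Sum>k<p. ?f k) + ?f p = 0 + ?f p] (mod p)"
    by (rule cong_add) simp
  then show ?thesis
    using assms(2) by (simp add: fib_binom_sum_def flip: lessThan_Suc_atMost)
qed

lemma fib_binom_sum_Suc_prime_cong:
  assumes "prime p" "odd p"
  shows "[fib_binom_sum (p + 1) = 1 + 5 ^ (p div 2)] (mod p)"
proof -
  let ?f = "\<lambda>k. if odd k then ((p + 1) choose k) * 5 ^ (k div 2) else 0"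
  have p3: "p \<ge> 3"
    using assms prime_ge_2_nat[of p] by presburger
  have "[(\<Sum>k\<in>{..p+1} - {1, p}. ?f k) = 0] (mod p)"
    unfolding cong_0_iff
  proof (intro dvd_sum)
    fix k assume k: "k \<in> {..p+1} - {1, p}"
    show "p dvd ?f k"
    proof (cases "odd k")
      case True
      with k assms(2) have "2 \<le> k" "k < p"
        by (auto elim!: oddE)
      then have "p dvd (p choose (k - 1)) + (p choose k)"
        using assms(1) by (intro dvd_add dvd_choose_prime) auto
      moreover have "(p + 1) choose k = (p choose (k - 1)) + (p choose k)"
        using \<open>2 \<le> k\<close> by (cases k) auto
      ultimately show ?thesis by simp
    qed simp
  qed
  moreover have "(\<Sum>k\<in>{1, p}. ?f k) = (p + 1) * (1 + 5 ^ (p div 2))"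
    using assms(2) p3 binomial_symmetric[of p "p + 1"] by (simp add: algebra_simps)
  moreover have "[(p + 1) * (1 + 5 ^ (p div 2)) = 1 * (1 + 5 ^ (p div 2))] (mod p)"
    using p3 by (intro cong_scalar_right) (simp add: cong_def mod_Suc)
  ultimately have "[(\<Sum>k\<in>{..p+1} - {1, p}. ?f k) + (\<Sum>k\<in>{1, p}. ?f k) = 0 + 1 * (1 + 5 ^ (p div 2))] (mod p)"
    by (intro cong_add) simp_all
  moreover have "fib_binom_sum (p + 1) = (\<Sum>k\<in>{..p+1} - {1, p}. ?f k) + (\<Sum>k\<in>{1, p}. ?f k)"
    unfolding fib_binom_sum_def by (rule sum.subset_diff) auto
  ultimately show ?thesis
    by simp
qed

lemma fib_prime_cong:
  assumes "prime p" "odd p"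
  shows "[fib p = 5 ^ (p div 2)] (mod p)"
    and "[2 * fib (p + 1) = 1 + 5 ^ (p div 2)] (mod p)"
proof -
  have "coprime 2 p" using assms(2) by simp
  have "\<not> p dvd 2"
    using primes_dvd_imp_eq[OF assms(1) two_is_prime_nat] assms(2) by auto
  with assms(1) have "[2 ^ (p - 1) = 1] (mod p)"
    by (rule fermat_theorem)
  then have "[2 ^ (p - 1) * 2 = 1 * 2] (mod p)"
    by (rule cong_scalar_right)
  moreover have "2 ^ (p - 1) * 2 = (2 :: nat) ^ p"
    using assms(2) by (cases p) simp_all
  ultimately have fermat: "[2 ^ p = 2] (mod p)"
    by simp
  have "[2 * fib p = 2 ^ p * fib p] (mod p)"
    by (intro cong_scalar_right) (rule cong_sym[OF fermat])
  also have "2 ^ p * fib p = 2 * fib_binom_sum p"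
    by (rule fib_binom_sum_eq)
  also have "[\<dots> = 2 * 5 ^ (p div 2)] (mod p)"
    using fib_binom_sum_prime_cong[OF assms] by (rule cong_scalar_left)
  finally show "[fib p = 5 ^ (p div 2)] (mod p)"
    using cong_mult_lcancel_nat \<open>coprime 2 p\<close> by blast
  have "[2 * (2 * fib (p + 1)) = 2 ^ p * 2 * fib (p + 1)] (mod p)"
    unfolding mult.assoc[symmetric] by (intro cong_scalar_right) (rule cong_sym[OF fermat])
  also have "2 ^ p * 2 * fib (p + 1) = 2 * fib_binom_sum (p + 1)"
    using fib_binom_sum_eq[of "p + 1"] by simp
  also have "[\<dots> = 2 * (1 + 5 ^ (p div 2))] (mod p)"
    using fib_binom_sum_Suc_prime_cong[OF assms] by (rule cong_scalar_left)
  finally show "[2 * fib (p + 1) = 1 + 5 ^ (p div 2)] (mod p)"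
    using cong_mult_lcancel_nat \<open>coprime 2 p\<close> by blast
qed

lemma five_power_half_cong_one_or_minus_one:
  assumes "prime p" "odd p" "p \<noteq> 5"
  shows "[5 ^ (p div 2) = 1] (mod p) \<or> p dvd 5 ^ (p div 2) + 1"
proof -
  define e :: nat where "e = 5 ^ (p div 2)"
  have "e \<ge> 1" unfolding e_def by simp
  have "p - 1 = p div 2 + p div 2"
    using assms(2) by presburger
  then have "5 ^ (p - 1) = e * e"
    unfolding e_def by (simp add: power_add)
  moreover have "\<not> p dvd 5"
    using assms primes_dvd_imp_eq[of p 5] by auto
  with assms(1) have "[5 ^ (p - 1) = 1] (mod p)"
    by (rule fermat_theorem)
  ultimately have "p dvd e * e - 1"
    using \<open>e \<ge> 1\<close> by (simp add: cong_altdef_nat)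
  also have "e * e - 1 = (e - 1) * (e + 1)"
    using \<open>e \<ge> 1\<close> by (cases e) simp_all
  finally have "p dvd e - 1 \<or> p dvd e + 1"
    using assms(1) by (simp only: prime_dvd_mult_iff)
  then show ?thesis
    using \<open>e \<ge> 1\<close> unfolding e_def by (simp add: cong_altdef_nat)
qed

lemma five_power_half_cong_one:
  assumes "prime q" "q mod 5 = 1 \<or> q mod 5 = 4"
  shows "[5 ^ (q div 2) = 1] (mod q)"
proof -
  have "q > 2" "q \<noteq> 5"
    using assms prime_ge_2_nat[of q] by (auto simp: le_less)
  have q_mod: "int q mod 5 = int (q mod 5)"
    by (simp add: of_nat_mod)
  have "[1 ^ 2 = int q] (mod 5) \<or> [2 ^ 2 = int q] (mod 5)"
    using assms(2) q_mod by (auto simp: cong_def)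
  then have "QuadRes 5 (int q)"
    unfolding QuadRes_def by blast
  moreover have "\<not> [int q = 0] (mod 5)"
    using assms(2) q_mod by (auto simp: cong_def)
  ultimately have "Legendre (int q) 5 = 1"
    unfolding Legendre_def by simp
  \<comment> \<open>reciprocity with sign \<open>+1\<close>, since \<open>5 = 1 mod 4\<close>\<close>
  moreover have "Legendre 5 (int q) * Legendre (int q) 5 = 1"
    using Quadratic_Reciprocity[of 5 q] assms(1) \<open>q > 2\<close> \<open>q \<noteq> 5\<close>
    by (simp add: power_mult)
  ultimately have "Legendre 5 (int q) = 1" by simp
  moreover have "[Legendre 5 (int q) = 5 ^ ((q - 1) div 2)] (mod int q)"
    using euler_criterion[of q 5] assms(1) \<open>q > 2\<close> by simp
  moreover have "(q - 1) div 2 = q div 2"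
    using prime_odd_nat[OF assms(1) \<open>q > 2\<close>] by presburger
  ultimately have "[int 1 = int (5 ^ (q div 2))] (mod int q)"
    by simp
  then show ?thesis
    by (simp only: cong_int_iff cong_sym_eq)
qed

lemma prime_dvd_fib_pred:
  assumes "prime p" "odd p" "[5 ^ (p div 2) = 1] (mod p)"
  shows "p dvd fib (p - 1)" and "[fib p = 1] (mod p)"
proof -
  have "coprime 2 p" using assms(2) by simp
  show fib_p: "[fib p = 1] (mod p)"
    using fib_prime_cong(1)[OF assms(1,2)] assms(3) by (rule cong_trans)
  have "[2 * fib (p + 1) = 1 + 5 ^ (p div 2)] (mod p)"
    using assms(1,2) by (rule fib_prime_cong(2))
  also have "[1 + 5 ^ (p div 2) = 1 + 1] (mod p)"
    using assms(3) by (simp only: cong_add_lcancel_nat)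
  also have "1 + 1 = 2 * (1 :: nat)"
    by simp
  finally have "[fib (p + 1) = 1] (mod p)"
    using cong_mult_lcancel_nat \<open>coprime 2 p\<close> by blast
  moreover have "fib (p + 1) = fib p + fib (p - 1)"
    using fib_plus_2[of "p - 1"] assms(2) by (cases p) simp_all
  ultimately have "[fib p + fib (p - 1) = 1] (mod p)"
    by simp
  also have "[1 = fib p + 0] (mod p)"
    using cong_sym[OF fib_p] by simp
  finally have "[fib p + fib (p - 1) = fib p + 0] (mod p)" .
  then show "p dvd fib (p - 1)"
    by (simp only: cong_add_lcancel_nat cong_0_iff)
qed

lemma prime_dvd_fib_succ:
  assumes "prime p" "odd p" "p dvd 5 ^ (p div 2) + 1"
  shows "p dvd fib (p + 1)"
proof -
  have "p dvd 2 * fib (p + 1)"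
    using cong_dvd_iff[OF fib_prime_cong(2)[OF assms(1,2)]] assms(3) by (simp add: add.commute)
  moreover have "coprime p 2" using assms(2) by simp
  ultimately show ?thesis
    by (simp add: coprime_dvd_mult_right_iff)
qed

lemma prime_dvd_fib_pred_or_succ:
  assumes "prime p" "p \<noteq> 5"
  shows "p dvd fib (p - 1) \<or> p dvd fib (p + 1)"
proof (cases "p = 2")
  case True
  then show ?thesis by (simp add: eval_nat_numeral)
next
  case False
  then have "odd p"
    using assms(1) primes_dvd_imp_eq[of 2 p] by auto
  then show ?thesis
    using assms five_power_half_cong_one_or_minus_one prime_dvd_fib_pred prime_dvd_fib_succ by blast
qed

lemma fib_dvd_fib: "m dvd n \<Longrightarrow> fib m dvd fib n"
  by (metis fib_gcd gcd_dvd2 gcd_nat.absorb1)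

lemma fib_rank_dvd_iff:
  assumes "0 < n" "p dvd fib n"
  shows "p dvd fib m \<longleftrightarrow> fib_rank p dvd m"
proof -
  let ?z = "fib_rank p"
  have z: "0 < ?z" "p dvd fib ?z"
    using LeastI[of "\<lambda>k. 0 < k \<and> p dvd fib k" n] assms unfolding fib_rank_def by auto
  show ?thesis
  proof
    assume "p dvd fib m"
    then have "0 < gcd ?z m \<and> p dvd fib (gcd ?z m)"
      using z by (simp add: fib_gcd)
    then have "?z \<le> gcd ?z m"
      unfolding fib_rank_def by (rule Least_le)
    then have "gcd ?z m = ?z"
      using gcd_le1_nat[of ?z m] z(1) by linarith
    then show "?z dvd m"
      by (metis gcd_dvd2)
  next
    assume "?z dvd m"
    then show "p dvd fib m"
      using z(2) fib_dvd_fib dvd_trans by blast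
  qed
qed

lemma prime_dvd_fib_iff_fib_rank_dvd:
  assumes "prime p" "p \<noteq> 5"
  shows "p dvd fib m \<longleftrightarrow> fib_rank p dvd m"
proof -
  obtain n where "n = p - 1 \<or> n = p + 1" "p dvd fib n"
    using prime_dvd_fib_pred_or_succ[OF assms] by blast
  moreover have "0 < p - 1"
    using prime_gt_1_nat[OF assms(1)] by simp
  ultimately have "0 < n" "p dvd fib n"
    by auto
  then show ?thesis
    by (rule fib_rank_dvd_iff)
qed

lemma fib_rank_dvd_pred_or_succ:
  assumes "prime p" "p \<noteq> 5"
  shows "fib_rank p dvd p - 1 \<or> fib_rank p dvd p + 1"
  using prime_dvd_fib_pred_or_succ[OF assms] prime_dvd_fib_iff_fib_rank_dvd[OF assms] by blast

lemma fib_mod_period_mult: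
  assumes "\<forall>m. fib (m + k) mod n = fib m mod n"
  shows "fib (m + j * k) mod n = fib m mod n"
proof (induction j)
  case (Suc j)
  have "fib (m + Suc j * k) mod n = fib ((m + j * k) + k) mod n"
    by (simp add: algebra_simps)
  also have "\<dots> = fib (m + j * k) mod n"
    using assms by blast
  finally show ?case
    using Suc by simp
qed simp

lemma pisano_dvd:
  assumes "0 < k" "\<forall>m. fib (m + k) mod n = fib m mod n"
  shows "pisano n dvd k"
proof (rule ccontr)
  let ?P = "pisano n"
  assume "\<not> ?P dvd k"
  then have "0 < k mod ?P"
    by (simp add: mod_greater_zero_iff_not_dvd)
  have P: "0 < ?P \<and> (\<forall>m. fib (m + ?P) mod n = fib m mod n)"
    unfolding pisano_def by (rule LeastI[of _ k]) (use assms in auto)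
  have "fib (m + k mod ?P) mod n = fib m mod n" for m
  proof -
    have "fib (m + k mod ?P) mod n = fib (m + k mod ?P + (k div ?P) * ?P) mod n"
      using fib_mod_period_mult[of ?P n "m + k mod ?P" "k div ?P"] P by simp
    also have "m + k mod ?P + (k div ?P) * ?P = m + k"
      by simp
    finally show ?thesis
      using assms(2) by simp
  qed
  with \<open>0 < k mod ?P\<close> have "?P \<le> k mod ?P"
    unfolding pisano_def by (intro Least_le) simp
  with P show False
    by (metis mod_less_divisor not_le)
qed

lemma fib_mod_period_if:
  assumes "[fib k = 0] (mod n)" "[fib (Suc k) = 1] (mod n)"
  shows "fib (m + k) mod n = fib m mod n"
proof (cases m)
  case 0
  then show ?thesis
    using assms(1) by (simp add: cong_def)
next
  case (Suc j)
  have "fib (m + k) = fib (Suc k) * fib (Suc j) + fib k * fib j"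
    using fib_add[of j k] Suc by simp
  also have "[\<dots> = 1 * fib (Suc j) + 0 * fib j] (mod n)"
    using assms by (intro cong_add cong_mult) simp_all
  finally show ?thesis
    using Suc by (simp add: cong_def)
qed

lemma pisano_dvd_pred:
  assumes "prime q" "q mod 5 = 1 \<or> q mod 5 = 4"
  shows "pisano q dvd q - 1"
proof -
  have "q > 2"
    using assms prime_ge_2_nat[of q] by (auto simp: le_less)
  then have "odd q"
    using assms(1) prime_odd_nat by blast
  have "[5 ^ (q div 2) = 1] (mod q)"
    using assms by (rule five_power_half_cong_one)
  then have "[fib (q - 1) = 0] (mod q)" "[fib (Suc (q - 1)) = 1] (mod q)"
    using prime_dvd_fib_pred[OF assms(1) \<open>odd q\<close>] \<open>q > 2\<close> by (simp_all add: cong_0_iff)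
  then have "\<forall>m. fib (m + (q - 1)) mod q = fib m mod q"
    using fib_mod_period_if by blast
  then show ?thesis
    using \<open>q > 2\<close> by (intro pisano_dvd) simp_all
qed

lemma sophie_germain_residues:
  fixes q :: nat
  assumes "prime q" "prime (2 * q + 1)" "q > 5"
  shows "q mod 3 = 2" and "q mod 5 = 1 \<or> q mod 5 = 3 \<or> q mod 5 = 4"
proof -
  have not_dvd: "\<not> r dvd n" if "prime r" "prime n" "r < n" for r n :: nat
    using primes_dvd_imp_eq that by blast
  have "\<not> 3 dvd q" "\<not> 5 dvd q"
    using not_dvd[of _ q] assms(1,3) by simp_all
  moreover have "\<not> 3 dvd 2 * q + 1" "\<not> 5 dvd 2 * q + 1"
    using not_dvd[of _ "2 * q + 1"] assms(2,3) by simp_all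
  ultimately show "q mod 3 = 2" "q mod 5 = 1 \<or> q mod 5 = 3 \<or> q mod 5 = 4"
    by presburger+
qed

theorem theorem7p1:
  fixes q :: nat
  assumes "prime q" and "prime (2 * q + 1)" and "q > 5"
    and "fib_rank (2 * q + 1) dvd pisano q"
  shows "[q = 8] (mod 15)"
proof -
  define p where "p = 2 * q + 1"
  have p: "prime p" "p \<noteq> 5"
    using assms by (simp_all add: p_def)
  have "\<not> (q mod 5 = 1 \<or> q mod 5 = 4)"
  proof
    assume "q mod 5 = 1 \<or> q mod 5 = 4"
    with assms(1) have "pisano q dvd q - 1"
      by (rule pisano_dvd_pred)
    then have rank_dvd: "fib_rank p dvd 2 * (q - 1)"
      using assms(4) dvd_trans[of "fib_rank p" "pisano q"] unfolding p_def by auto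
    have "fib_rank p dvd 2 * q \<or> fib_rank p dvd 2 * q + 2"
      using fib_rank_dvd_pred_or_succ[OF p] by (simp add: p_def)
    then have "fib_rank p dvd 2 * q - 2 * (q - 1) \<or> fib_rank p dvd (2 * q + 2) - 2 * (q - 1)"
      using rank_dvd dvd_diff_nat by blast
    moreover have "2 * q - 2 * (q - 1) = 2" "(2 * q + 2) - 2 * (q - 1) = 4"
      using assms(3) by simp_all
    ultimately have "fib_rank p dvd 4"
      using dvd_trans[of "fib_rank p" 2 4] by auto
    then have "p dvd 3"
      using prime_dvd_fib_iff_fib_rank_dvd[OF p, of 4] by (simp add: eval_nat_numeral)
    then show False
      using assms(3) dvd_imp_le[of p 3] by (simp add: p_def)
  qed
  with sophie_germain_residues[OF assms(1-3)] show ?thesis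
    unfolding cong_def by presburger
qed

end
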